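(* Let $G=(V,E)$ be a $D$-regular unweighted Ricci-flat graph with $D\ge2$, and assume $\mu(y)=\mu_0>0$ for all $y\in V$. Then $G$ satisfies CD$(F;0)$ with the CD-function $$F(a)=\frac{D}{\mu_0^2}\exp\Big(-\frac{\mu_0}{D}a\Big)\Big[\Upsilon\Big(\frac{2\mu_0}{D}a\Big)+(D-1)\,\Upsilon\Big(-\frac{2\mu_0}{D(D-1)}a\Big)\Big],\quad a\ge0;$$ that is, $F$ is a (strictly convex) CD-function, and for every $x\in V$ and every $v:V\to\mathbb R$ with $Lv(x)>0$ and $Lv(x)\ge Lv(y)$ for all $y\sim x$ one has $\Delta\Psi_{\Upsilon'}(v)(x)\ge F(Lv(x))$.
   Context: Unweighted means $w_{xy}=1$ for all edges; $D$-regular means every vertex has exactly $D$ neighbours. The Laplacian is $\Delta u(x)=\frac1{\mu(x)}\sum_{y\sim x}(u(y)-u(x))$, $L=-\Delta$, $\Psi_H(v)(x)=\frac1{\mu(x)}\sum_{y\sim x}H(v(y)-v(x))$, $\Upsilon(z)=e^z-1-z$, $\Upsilon'(z)=e^z-1$. A CD-function is a continuous $F:[0,\infty)\to[0,\infty)$ with $F(0)=0$, $F(x)/x$ strictly increasing on $(0,\infty)$, and $\int_1^\infty dr/F(r)<\infty$. A $D$-regular graph is Ricci-flat at $x$ if, with $N(x)=\{x\}\cup\{y:y\sim x\}$, there exist maps $\eta_1,\dots,\eta_D:N(x)\to V$ such that (i) $\eta_i(y)\sim y$ for all $i$ and $y\in N(x)$; (ii) $\eta_i(y)\ne\eta_j(y)$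 for $y\in N(x)$, $i\ne j$; (iii) for each $i$, the lists $(\eta_i(\eta_j(x)))_{j=1}^D$ and $(\eta_j(\eta_i(x)))_{j=1}^D$ coincide as multisets. $G$ is Ricci-flat if it is Ricci-flat at every vertex. *)

theory Defs
  imports "HOL-Analysis.Analysis" "HOL-Library.Multiset"
begin

text \<open>Graphs: vertex set = the type 'a, adjacency E (symmetric, irreflexive, unweighted).\<close>

definition nbrs :: "('a \<Rightarrow> 'a \<Rightarrow> bool) \<Rightarrow> 'a \<Rightarrow> 'a set" where
  "nbrs E x = {y. E x y}"

definition simple_graph :: "('a \<Rightarrow> 'a \<Rightarrow> bool) \<Rightarrow> bool" where
  "simple_graph E \<longleftrightarrow> (\<forall>x y. E x y \<longrightarrow> E y x) \<and> (\<forall>x. \<not> E x x)"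

definition regular :: "('a \<Rightarrow> 'a \<Rightarrow> bool) \<Rightarrow> nat \<Rightarrow> bool" where
  "regular E D \<longleftrightarrow> (\<forall>x. finite (nbrs E x) \<and> card (nbrs E x) = D)"

definition closed_nbhd :: "('a \<Rightarrow> 'a \<Rightarrow> bool) \<Rightarrow> 'a \<Rightarrow> 'a set" where
  "closed_nbhd E x = insert x (nbrs E x)"

text \<open>Ricci-flatness at x; the maps eta_1..eta_D are indexed by i < D.\<close>
definition ricci_flat_at :: "('a \<Rightarrow> 'a \<Rightarrow> bool) \<Rightarrow> nat \<Rightarrow> 'a \<Rightarrow> bool" where
  "ricci_flat_at E D x \<longleftrightarrow>
     (\<exists>eta :: nat \<Rightarrow> 'a \<Rightarrow> 'a.
        (\<forall>i<D. \<forall>y\<in>closed_nbhd E x. E y (eta i y)) \<and>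
        (\<forall>y\<in>closed_nbhd E x. \<forall>i<D. \<forall>j<D. i \<noteq> j \<longrightarrow> eta i y \<noteq> eta j y) \<and>
        (\<forall>i<D. image_mset (\<lambda>j. eta i (eta j x)) (mset_set {..<D})
                = image_mset (\<lambda>j. eta j (eta i x)) (mset_set {..<D})))"

definition ricci_flat :: "('a \<Rightarrow> 'a \<Rightarrow> bool) \<Rightarrow> nat \<Rightarrow> bool" where
  "ricci_flat E D \<longleftrightarrow> (\<forall>x. ricci_flat_at E D x)"

definition laplacian :: "('a \<Rightarrow> 'a \<Rightarrow> bool) \<Rightarrow> ('a \<Rightarrow> real) \<Rightarrow> ('a \<Rightarrow> real) \<Rightarrow> 'a \<Rightarrow> real" where
  "laplacian E \<mu> u x = (1 / \<mu> x) * (\<Sum>y\<in>nbrs E x. u y - u x)"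

definition Lop :: "('a \<Rightarrow> 'a \<Rightarrow> bool) \<Rightarrow> ('a \<Rightarrow> real) \<Rightarrow> ('a \<Rightarrow> real) \<Rightarrow> 'a \<Rightarrow> real" where
  "Lop E \<mu> u x = - laplacian E \<mu> u x"

definition Psi :: "('a \<Rightarrow> 'a \<Rightarrow> bool) \<Rightarrow> ('a \<Rightarrow> real) \<Rightarrow> (real \<Rightarrow> real) \<Rightarrow> ('a \<Rightarrow> real) \<Rightarrow> 'a \<Rightarrow> real" where
  "Psi E \<mu> H v x = (1 / \<mu> x) * (\<Sum>y\<in>nbrs E x. H (v y - v x))"

definition Upsilon :: "real \<Rightarrow> real" where
  "Upsilon z = exp z - 1 - z"

definition Upsilon' :: "real \<Rightarrow> real" where
  "Upsilon' z = exp z - 1"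

definition CD_function :: "(real \<Rightarrow> real) \<Rightarrow> bool" where
  "CD_function F \<longleftrightarrow>
     continuous_on {0..} F \<and> (\<forall>x\<ge>0. F x \<ge> 0) \<and> F 0 = 0 \<and>
     strict_mono_on {0<..} (\<lambda>x. F x / x) \<and>
     (\<lambda>r. 1 / F r) integrable_on {1..}"

definition strictly_convex_on :: "real set \<Rightarrow> (real \<Rightarrow> real) \<Rightarrow> bool" where
  "strictly_convex_on S f \<longleftrightarrow>
     (\<forall>x\<in>S. \<forall>y\<in>S. \<forall>t. x \<noteq> y \<and> 0 < t \<and> t < 1 \<longrightarrow>
        f ((1 - t) * x + t * y) < (1 - t) * f x + t * f y)"

definition CD_F0 :: "('a \<Rightarrow> 'a \<Rightarrow> bool) \<Rightarrow> ('a \<Rightarrow> real) \<Rightarrow> (real \<Rightarrow> real) \<Rightarrow> bool" where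
  "CD_F0 E \<mu> F \<longleftrightarrow> CD_function F \<and>
     (\<forall>x (v :: 'a \<Rightarrow> real). Lop E \<mu> v x > 0 \<and> (\<forall>y. E x y \<longrightarrow> Lop E \<mu> v x \<ge> Lop E \<mu> v y) \<longrightarrow>
        laplacian E \<mu> (Psi E \<mu> Upsilon' v) x \<ge> F (Lop E \<mu> v x))"

definition F_flat :: "nat \<Rightarrow> real \<Rightarrow> real \<Rightarrow> real" where
  "F_flat D \<mu>0 a = (real D / \<mu>0^2) * exp (- (\<mu>0 / real D) * a) *
     (Upsilon (2 * \<mu>0 / real D * a) + (real D - 1) * Upsilon (- (2 * \<mu>0 / (real D * (real D - 1))) * a))"

end

theory Submission
  imports Defs "HOL-Combinatorics.Transposition"
begin

text \<open>
  Put \<open>w j = v (eta j x) - v x\<close> and \<open>h = pair_cost D\<close>. Then \<open>\<mu>0\<^sup>2\<close> times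
  \<open>\<Delta>\<Psi>(v)(x)\<close> is the sum over \<open>i\<close> of the row sums
  \<open>\<Sum>j. exp (v (eta i (eta j x)) - v (eta j x))\<close>, minus \<open>D \<Sum>i. exp (w i)\<close>.
  Ricci-flatness identifies the entries of row \<open>i\<close> with the neighbours of \<open>eta i x\<close> and
  yields a permutation \<open>\<sigma>\<close> with \<open>eta i (eta (\<sigma> i) x) = x\<close>, so row \<open>i\<close> contains the
  exponent \<open>- w (\<sigma> i)\<close>. Maximality of \<open>Lv(x)\<close> bounds the sum of the exponents of row
  \<open>i\<close> below by \<open>D w i\<close>, and Jensen's inequality for the remaining \<open>D - 1\<close> entries bounds
  the row sum below by \<open>h (w i) (w (\<sigma> i)) + D exp (w i)\<close>.

  The cost \<open>h\<close> is supermodular, its symmetrisation dominates twice the diagonal value at the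
  midpoint, and its diagonal is strictly convex. Exchanging values until the largest \<open>w\<close> is
  paired with the smallest and peeling off that 2-cycle shows by induction that
  \<open>\<Sum>i. h (w i) (w (\<sigma> i)) \<ge> D h m m\<close> for the mean \<open>m = - \<mu>0 Lv(x) / D\<close>; and
  \<open>(D / \<mu>0\<^sup>2) h m m\<close> is exactly \<open>F(Lv(x))\<close>.
\<close>

section \<open>Convexity and growth of real functions\<close>

lemma Upsilon_nonneg: "0 \<le> Upsilon z"
  using exp_ge_add_one_self[of z] unfolding Upsilon_def by linarith

lemma exp_minus_mult_Upsilon_double_ge:
  fixes s :: real
  assumes "0 \<le> s"
  shows "s\<^sup>2 / 2 \<le> exp (- s) * Upsilon (2 * s)"
proof -
  have "1 + 2 * s \<le> (1 + s) * (1 + s)"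
    by (simp add: algebra_simps)
  also have "\<dots> \<le> exp s * (1 + s)"
    using assms exp_ge_add_one_self[of s] by (intro mult_right_mono) auto
  finally have "exp (- s) * (1 + 2 * s) \<le> 1 + s"
    by (simp add: exp_minus field_simps)
  moreover have "exp (- s) * Upsilon (2 * s) = exp s - exp (- s) * (1 + 2 * s)"
    by (simp add: Upsilon_def algebra_simps flip: exp_add)
  ultimately show ?thesis
    using exp_lower_Taylor_quadratic[OF assms] by linarith
qed

lemma sum_exp_ge_card_mult_exp_mean:
  fixes y :: "'a \<Rightarrow> real"
  assumes "finite J" "J \<noteq> {}"
  shows "real (card J) * exp (sum y J / real (card J)) \<le> (\<Sum>j\<in>J. exp (y j))"
proof -
  have "exp (\<Sum>j\<in>J. (1 / real (card J)) *\<^sub>R y j) \<le> (\<Sum>j\<in>J. 1 / real (card J) * exp (y j))"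
    using assms by (intro convex_on_sum[OF _ _ exp_convex]) auto
  then show ?thesis
    using assms by (simp add: sum_divide_distrib[symmetric] le_divide_eq mult.commute card_gt_0_iff)
qed

lemma convex_on_weighted_mean_le:
  fixes g :: "real \<Rightarrow> real"
  assumes "convex_on UNIV g" "0 < p" "0 \<le> q"
  shows "(p + q) * g ((p * x + q * y) / (p + q)) \<le> p * g x + q * g y"
proof -
  define t where "t = q / (p + q)"
  have t: "0 \<le> t" "t \<le> 1" "1 - t = p / (p + q)"
    using assms by (auto simp: t_def field_simps)
  have "g ((1 - t) *\<^sub>R x + t *\<^sub>R y) \<le> (1 - t) * g x + t * g y"
    using convex_onD[OF assms(1) t(1,2)] by simp
  then have "g ((p * x + q * y) / (p + q)) \<le> (p * g x + q * g y) / (p + q)"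
    unfolding t(3) by (simp add: t_def add_divide_distrib)
  then show ?thesis
    using assms by (simp add: field_simps)
qed

lemma strictly_convex_onI_deriv:
  fixes f f' :: "real \<Rightarrow> real"
  assumes deriv: "\<And>x. (f has_real_derivative f' x) (at x)"
    and mono: "\<And>x y. x < y \<Longrightarrow> f' x < f' y"
  shows "strictly_convex_on S f"
proof -
  have less: "f ((1 - t) * x + t * y) < (1 - t) * f x + t * f y"
    if "x < y" "0 < t" "t < 1" for x y t
  proof -
    define z where "z = (1 - t) * x + t * y"
    have zx: "z - x = t * (y - x)" and yz: "y - z = (1 - t) * (y - x)"
      by (simp_all add: z_def algebra_simps)
    have "0 < z - x" "0 < y - z"
      unfolding zx yz using that by simp_all
    then have "x < z" "z < y"
      by simp_all
    obtain a where a: "x < a" "a < z" "f z - f x = (z - x) * f' a"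
      using MVT2[OF \<open>x < z\<close>] deriv by blast
    obtain b where b: "z < b" "b < y" "f y - f z = (y - z) * f' b"
      using MVT2[OF \<open>z < y\<close>] deriv by blast
    have fxz: "f x - f z = - (t * (y - x) * f' a)"
      using a(3) unfolding zx by linarith
    have "(1 - t) * f x + t * f y - f z = (1 - t) * (f x - f z) + t * (f y - f z)"
      by (simp add: algebra_simps)
    also have "\<dots> = t * (1 - t) * (y - x) * (f' b - f' a)"
      unfolding fxz b(3) yz by (simp add: algebra_simps)
    also have "\<dots> > 0"
      using that a b mono[of a b] by simp
    finally show ?thesis
      by (simp add: z_def)
  qed
  show ?thesis
    unfolding strictly_convex_on_def
  proof (intro ballI allI impI)
    fix x y t :: real assume "x \<noteq> y \<and> 0 < t \<and> t < 1"
    then consider "x < y" "0 < t" "t < 1" | "y < x" "0 < 1 - t" "1 - t < 1"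
      by linarith
    then show "f ((1 - t) * x + t * y) < (1 - t) * f x + t * f y"
      by cases (use less[of x y t] less[of y x "1 - t"] in \<open>simp_all add: algebra_simps\<close>)
  qed
qed

lemma strictly_convex_on_scale_compose:
  fixes g :: "real \<Rightarrow> real"
  assumes g: "strictly_convex_on UNIV g" and "0 < c" "k \<noteq> 0"
  shows "strictly_convex_on S (\<lambda>a. c * g (k * a))"
  unfolding strictly_convex_on_def
proof (intro ballI allI impI)
  fix x y t :: real assume xyt: "x \<noteq> y \<and> 0 < t \<and> t < 1"
  have "k * ((1 - t) * x + t * y) = (1 - t) * (k * x) + t * (k * y)"
    by (simp add: algebra_simps)
  moreover have "g ((1 - t) * (k * x) + t * (k * y)) < (1 - t) * g (k * x) + t * g (k * y)"
    using g xyt assms(3) unfolding strictly_convex_on_def by simp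
  ultimately have "c * g (k * ((1 - t) * x + t * y)) < c * ((1 - t) * g (k * x) + t * g (k * y))"
    using \<open>0 < c\<close> by simp
  then show "c * g (k * ((1 - t) * x + t * y)) < (1 - t) * (c * g (k * x)) + t * (c * g (k * y))"
    by (simp add: algebra_simps)
qed

lemma strict_mono_on_divide_self_if_strictly_convex:
  fixes F :: "real \<Rightarrow> real"
  assumes "strictly_convex_on {0..} F" "F 0 = 0"
  shows "strict_mono_on {0<..} (\<lambda>x. F x / x)"
proof (rule strict_mono_onI)
  fix x y :: real assume "x \<in> {0<..}" "y \<in> {0<..}" "x < y"
  then have "0 < x" "0 < y" "x < y" by auto
  then have "F ((1 - x / y) * 0 + x / y * y) < (1 - x / y) * F 0 + x / y * F y"
    using assms(1)[unfolded strictly_convex_on_def, rule_format, of 0 y "x / y"] by simp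
  moreover have "(1 - x / y) * 0 + x / y * y = x"
    using \<open>0 < y\<close> by simp
  ultimately have "F x < x * (F y / y)"
    using assms(2) by simp
  then show "F x / x < F y / y"
    using \<open>0 < x\<close> by (simp add: divide_less_eq mult.commute)
qed

lemma integrable_on_inverse_if_quadratic_growth:
  fixes F :: "real \<Rightarrow> real"
  assumes cont: "continuous_on {1..} F" and "0 < c"
    and growth: "\<And>r. 1 \<le> r \<Longrightarrow> c * r\<^sup>2 \<le> F r"
  shows "(\<lambda>r. 1 / F r) integrable_on {1..}"
proof (rule measurable_bounded_by_integrable_imp_integrable_real)
  have pos: "0 < F r" if "r \<in> {1..}" for r
  proof -
    have "0 < c * r\<^sup>2"
      using that \<open>0 < c\<close> by simp
    then show ?thesis
      using growth[of r] that by simp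
  qed
  have "continuous_on {1..} (\<lambda>r. 1 / F r)"
    using pos by (intro continuous_intros cont) force
  then show "(\<lambda>r. 1 / F r) \<in> borel_measurable (lebesgue_on {1..})"
    by (rule continuous_imp_measurable_on_sets_lebesgue) simp
  have "(\<lambda>r::real. 1 / r ^ 2) integrable_on {1..}"
    using has_integral_inverse_power_to_inf[of 2 1] by auto
  from integrable_on_cmult_left[OF this, of "1 / c"]
  show "(\<lambda>r. 1 / c * (1 / r ^ 2)) integrable_on {1..}"
    by simp
  show "\<bar>1 / F r\<bar> \<le> 1 / c * (1 / r ^ 2)" if "r \<in> {1..}" for r
  proof -
    have "0 < c * r\<^sup>2"
      using that \<open>0 < c\<close> by simp
    then have "1 / F r \<le> 1 / (c * r\<^sup>2)"
      using growth[of r] that by (intro divide_left_mono) auto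
    then show ?thesis
      using pos[OF that] by simp
  qed
qed simp

section \<open>Permutation sums of a supermodular cost\<close>

lemma sum_remove_two:
  assumes "finite I" "p \<in> I" "k \<in> I" "p \<noteq> k"
  shows "sum g I = g p + g k + sum g (I - {p, k})"
  using sum.subset_diff[of "{p, k}" I g] assms by (simp add: add.commute)

locale pairing_cost =
  fixes h :: "real \<Rightarrow> real \<Rightarrow> real"
  assumes supermodular: "a' \<le> a \<Longrightarrow> b \<le> b' \<Longrightarrow> h a b + h a' b' \<le> h a b' + h a' b"
    and diag_le_swap_add: "2 * h ((a + b) / 2) ((a + b) / 2) \<le> h a b + h b a"
    and convex_diag: "convex_on UNIV (\<lambda>c. h c c)"
begin

lemma exchange_le:
  assumes "0 \<le> (a - a') * (b' - b)"
  shows "h a b + h a' b' \<le> h a b' + h a' b"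
proof -
  consider "a' \<le> a" "b \<le> b'" | "a \<le> a'" "b' \<le> b"
    using assms by (auto simp: zero_le_mult_iff)
  then show ?thesis
    by cases (use supermodular[of a' a b b'] supermodular[of a a' b' b] in auto)
qed

lemma sum_transpose_le:
  assumes "finite I" "p \<in> I" "k \<in> I"
    and "0 \<le> (w p - w k) * (w (\<sigma> p) - w (\<sigma> k))"
  shows "(\<Sum>i\<in>I. h (w i) (w (\<sigma> (Transposition.transpose p k i)))) \<le> (\<Sum>i\<in>I. h (w i) (w (\<sigma> i)))"
proof (cases "p = k")
  case False
  note split = sum_remove_two[OF assms(1-3) False]
  have "(\<Sum>i\<in>I - {p, k}. h (w i) (w (\<sigma> (Transposition.transpose p k i))))
      = (\<Sum>i\<in>I - {p, k}. h (w i) (w (\<sigma> i)))"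
    by (intro sum.cong) auto
  moreover have "h (w p) (w (\<sigma> k)) + h (w k) (w (\<sigma> p)) \<le> h (w p) (w (\<sigma> p)) + h (w k) (w (\<sigma> k))"
    using exchange_le[of "w p" "w k" "w (\<sigma> p)" "w (\<sigma> k)"] assms(4) by simp
  ultimately show ?thesis
    unfolding split[of "\<lambda>i. h (w i) (w (\<sigma> (Transposition.transpose p k i)))"] split[of "\<lambda>i. h (w i) (w (\<sigma> i))"]
    using False by simp
qed simp

lemma redirect_perm:
  assumes "finite I" "bij_betw \<sigma> I I" "p \<in> I" "q \<in> I"
    and "\<And>k. k \<in> I \<Longrightarrow> \<sigma> k = q \<Longrightarrow> 0 \<le> (w p - w k) * (w (\<sigma> p) - w q)"
  obtains \<tau> where "bij_betw \<tau> I I" "\<tau> p = q" "\<And>i. i \<noteq> p \<Longrightarrow> \<sigma> i \<noteq> q \<Longrightarrow> \<tau> i = \<sigma> i"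
    and "(\<Sum>i\<in>I. h (w i) (w (\<tau> i))) \<le> (\<Sum>i\<in>I. h (w i) (w (\<sigma> i)))"
proof -
  obtain k where k: "k \<in> I" "\<sigma> k = q"
    using assms(2,4) by (metis bij_betw_iff_bijections)
  show thesis
  proof (rule that[of "\<sigma> \<circ> Transposition.transpose p k"])
    show "bij_betw (\<sigma> \<circ> Transposition.transpose p k) I I"
      using assms(2,3) k(1) by (intro bij_betw_trans[of "Transposition.transpose p k" I I]) auto
    show "(\<sigma> \<circ> Transposition.transpose p k) i = \<sigma> i" if "i \<noteq> p" "\<sigma> i \<noteq> q" for i
    proof -
      have "i \<noteq> k"
        using that k by auto
      then show ?thesis
        using that by simp
    qed
    show "(\<Sum>i\<in>I. h (w i) (w ((\<sigma> \<circ> Transposition.transpose p k) i))) \<le> (\<Sum>i\<in>I. h (w i) (w (\<sigma> i)))"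
      using sum_transpose_le[OF assms(1,3) k(1)] assms(5)[OF k] k(2) by simp
  qed (use k in simp)
qed

lemma perm_swapping_extremes:
  assumes "finite I" "bij_betw \<sigma> I I" "i0 \<in> I" "j0 \<in> I" "i0 \<noteq> j0"
    and bounds: "\<And>i. i \<in> I \<Longrightarrow> w j0 \<le> w i \<and> w i \<le> w i0"
  obtains \<tau> where "bij_betw \<tau> I I" "\<tau> i0 = j0" "\<tau> j0 = i0"
    and "(\<Sum>i\<in>I. h (w i) (w (\<tau> i))) \<le> (\<Sum>i\<in>I. h (w i) (w (\<sigma> i)))"
proof -
  have "0 \<le> (w i0 - w k) * (w (\<sigma> i0) - w j0)" if "k \<in> I" for k
    using bounds[OF that] bounds[OF bij_betw_apply[OF assms(2,3)]] by simp
  then obtain \<sigma>' where \<sigma>': "bij_betw \<sigma>' I I" "\<sigma>' i0 = j0"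
    and le': "(\<Sum>i\<in>I. h (w i) (w (\<sigma>' i))) \<le> (\<Sum>i\<in>I. h (w i) (w (\<sigma> i)))"
    using redirect_perm[OF assms(1-4)] by blast
  have "0 \<le> (w j0 - w k) * (w (\<sigma>' j0) - w i0)" if "k \<in> I" for k
    using bounds[OF that] bounds[OF bij_betw_apply[OF \<sigma>'(1) assms(4)]]
    by (simp add: mult_nonpos_nonpos)
  then obtain \<tau> where "bij_betw \<tau> I I" "\<tau> j0 = i0" "\<tau> i0 = \<sigma>' i0"
    and "(\<Sum>i\<in>I. h (w i) (w (\<tau> i))) \<le> (\<Sum>i\<in>I. h (w i) (w (\<sigma>' i)))"
    using redirect_perm[OF assms(1) \<sigma>'(1) assms(4,3)] assms(5) \<sigma>'(2) by metis
  then show thesis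
    using that \<sigma>'(2) le' by fastforce
qed

theorem card_mult_diag_mean_le_sum_perm:
  assumes "finite I" "bij_betw \<sigma> I I"
  shows "real (card I) * h (sum w I / card I) (sum w I / card I) \<le> (\<Sum>i\<in>I. h (w i) (w (\<sigma> i)))"
  using assms
proof (induction "card I" arbitrary: I \<sigma> rule: less_induct)
  case (less I \<sigma>)
  show ?case
  proof (cases "I = {}")
    case False
    obtain i0 where i0: "i0 \<in> I" "\<And>i. i \<in> I \<Longrightarrow> w i \<le> w i0"
    proof -
      have "Max (w ` I) \<in> w ` I"
        using less.prems(1) False by simp
      then obtain k where "k \<in> I" "Max (w ` I) = w k"
        by auto
      then show thesis
        using that less.prems(1) by (metis Max_ge finite_imageI imageI)
    qed
    obtain j0 where j0: "j0 \<in> I" "\<And>i. i \<in> I \<Longrightarrow> w j0 \<le> w i"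
    proof -
      have "Min (w ` I) \<in> w ` I"
        using less.prems(1) False by simp
      then obtain k where "k \<in> I" "Min (w ` I) = w k"
        by auto
      then show thesis
        using that less.prems(1) by (metis Min_le finite_imageI imageI)
    qed
    show ?thesis
    proof (cases "i0 = j0")
      case True
      then have const: "w i = w i0" if "i \<in> I" for i
        using i0(2)[OF that] j0(2)[OF that] by simp
      then have "sum w I / card I = w i0"
        using less.prems(1) False by simp
      moreover have "w (\<sigma> i) = w i0" if "i \<in> I" for i
        using const bij_betw_apply[OF less.prems(2) that] by simp
      ultimately show ?thesis
        using const by simp
    next
      case False
      obtain \<tau> where \<tau>: "bij_betw \<tau> I I" "\<tau> i0 = j0" "\<tau> j0 = i0"
        and le: "(\<Sum>i\<in>I. h (w i) (w (\<tau> i))) \<le> (\<Sum>i\<in>I. h (w i) (w (\<sigma> i)))"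
        using perm_swapping_extremes[OF less.prems i0(1) j0(1) False] i0(2) j0(2) by blast
      define I' where "I' = I - {i0, j0}"
      have "finite I'" "card I' < card I"
        using less.prems(1) i0(1) by (auto simp: I'_def intro: psubset_card_mono)
      moreover have "bij_betw \<tau> I' I'"
        unfolding I'_def using \<tau> i0(1) j0(1) by (intro bij_betw_DiffI) (auto simp: bij_betw_def)
      ultimately have IH: "real (card I') * h (sum w I' / card I') (sum w I' / card I') \<le> (\<Sum>i\<in>I'. h (w i) (w (\<tau> i)))"
        using less.hyps by blast
      have "card {i0, j0} \<le> card I"
        using less.prems(1) i0(1) j0(1) by (intro card_mono) auto
      then have card: "real (card I) = 2 + real (card I')"
        using less.prems(1) i0(1) j0(1) False by (simp add: I'_def card_Diff_subset of_nat_diff)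
      have sum_w: "sum w I = 2 * ((w i0 + w j0) / 2) + real (card I') * (sum w I' / card I')"
        using sum_remove_two[OF less.prems(1) i0(1) j0(1) False, of w, folded I'_def] \<open>finite I'\<close>
        by (cases "I' = {}") simp_all
      have "real (card I) * h (sum w I / card I) (sum w I / card I)
          \<le> 2 * h ((w i0 + w j0) / 2) ((w i0 + w j0) / 2) + real (card I') * h (sum w I' / card I') (sum w I' / card I')"
        unfolding card sum_w by (rule convex_on_weighted_mean_le[OF convex_diag]) auto
      also have "\<dots> \<le> h (w i0) (w j0) + h (w j0) (w i0) + (\<Sum>i\<in>I'. h (w i) (w (\<tau> i)))"
        using diag_le_swap_add[of "w i0" "w j0"] IH by simp
      also have "\<dots> = (\<Sum>i\<in>I. h (w i) (w (\<tau> i)))"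
        unfolding sum_remove_two[OF less.prems(1) i0(1) j0(1) False] \<tau>(2,3) I'_def ..
      finally show ?thesis
        using le by simp
    qed
  qed simp
qed

end

section \<open>The pair cost and the CD-function\<close>

definition pair_cost :: "nat \<Rightarrow> real \<Rightarrow> real \<Rightarrow> real" where
  "pair_cost D a b = exp (- b) + (real D - 1) * exp ((real D * a + b) / (real D - 1)) - real D * exp a"

lemma pair_cost_eq_Upsilon:
  assumes "2 \<le> D"
  shows "pair_cost D a b = exp a * (Upsilon (- (a + b)) + (real D - 1) * Upsilon ((a + b) / (real D - 1)))"
proof -
  have "real D - 1 > 0"
    using assms by simp
  then have "a + (a + b) / (real D - 1) = (real D * a + b) / (real D - 1)"
    by (simp add: field_simps)
  then have "exp a * exp ((a + b) / (real D - 1)) = exp ((real D * a + b) / (real D - 1))"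
    by (simp flip: exp_add)
  moreover have "exp a * exp (- (a + b)) = exp (- b)"
    by (simp flip: exp_add)
  moreover have "(real D - 1) * ((a + b) / (real D - 1)) = a + b"
    using \<open>real D - 1 > 0\<close> by simp
  moreover have "exp a * (Upsilon (- (a + b)) + (real D - 1) * Upsilon ((a + b) / (real D - 1)))
      = exp a * exp (- (a + b)) + (real D - 1) * (exp a * exp ((a + b) / (real D - 1))) - real D * exp a
        + exp a * (a + b - (real D - 1) * ((a + b) / (real D - 1)))"
    by (simp add: Upsilon_def algebra_simps)
  ultimately show ?thesis
    by (simp add: pair_cost_def)
qed

lemma pair_cost_nonneg: "2 \<le> D \<Longrightarrow> 0 \<le> pair_cost D a b"
  using Upsilon_nonneg by (simp add: pair_cost_eq_Upsilon)

lemma pair_cost_diag_le_swap_add: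
  assumes "2 \<le> D"
  shows "2 * pair_cost D ((a + b) / 2) ((a + b) / 2) \<le> pair_cost D a b + pair_cost D b a"
proof -
  define R where "R = Upsilon (- (a + b)) + (real D - 1) * Upsilon ((a + b) / (real D - 1))"
  have "0 \<le> R"
    using assms Upsilon_nonneg by (simp add: R_def)
  have "0 \<le> (exp (a / 2) - exp (b / 2))\<^sup>2"
    by simp
  also have "\<dots> = exp a + exp b - 2 * exp ((a + b) / 2)"
    by (simp add: power2_eq_square algebra_simps add_divide_distrib flip: exp_add)
  finally have "2 * exp ((a + b) / 2) * R \<le> (exp a + exp b) * R"
    using \<open>0 \<le> R\<close> by (intro mult_right_mono) auto
  then show ?thesis
    using assms by (simp add: pair_cost_eq_Upsilon R_def add.commute algebra_simps)
qed

lemma pair_cost_supermodular: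
  assumes "2 \<le> D" "a' \<le> a" "b \<le> b'"
  shows "pair_cost D a b + pair_cost D a' b' \<le> pair_cost D a b' + pair_cost D a' b"
proof -
  define n where "n = real D - 1"
  have "n > 0"
    using assms by (simp add: n_def)
  have split: "exp ((real D * x + y) / n) = exp (real D * x / n) * exp (y / n)" for x y
    by (simp add: add_divide_distrib flip: exp_add)
  have "exp (real D * a' / n) \<le> exp (real D * a / n)" "exp (b / n) \<le> exp (b' / n)"
    using assms \<open>n > 0\<close> by (simp_all add: divide_right_mono)
  then have "0 \<le> n * ((exp (real D * a / n) - exp (real D * a' / n)) * (exp (b' / n) - exp (b / n)))"
    using \<open>n > 0\<close> by simp
  then show ?thesis
    unfolding pair_cost_def n_def[symmetric] split by (simp add: algebra_simps)
qed

lemma pair_cost_diag_deriv: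
  assumes "2 \<le> D"
  obtains d where "\<And>c. ((\<lambda>c. pair_cost D c c) has_real_derivative d c) (at c)"
    and "\<And>x y. x < y \<Longrightarrow> d x < d y"
proof -
  define k where "k = (real D + 1) / (real D - 1)"
  have "real D - 1 > 0"
    using assms by simp
  then have k: "1 < k" "(real D - 1) * k = real D + 1"
    by (simp_all add: k_def)
  have diag: "pair_cost D c c = exp (- c) + (real D - 1) * exp (k * c) - real D * exp c" for c
    using \<open>real D - 1 > 0\<close> by (simp add: pair_cost_def k_def field_simps)
  define d where "d c = - exp (- c) + (real D + 1) * exp (k * c) - real D * exp c" for c
  define d' where "d' c = exp (- c) + (real D + 1) * k * exp (k * c) - real D * exp c" for c
  have "((\<lambda>c. pair_cost D c c) has_real_derivative d c) (at c)" for c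
    unfolding diag d_def k(2)[symmetric]
    by (auto intro!: derivative_eq_intros simp: algebra_simps)
  moreover have d': "(d has_real_derivative d' c) (at c)" for c
    unfolding d_def d'_def by (auto intro!: derivative_eq_intros simp: algebra_simps)
  moreover have d'_pos: "0 < d' c" for c
  proof -
    \<comment> \<open>the second derivative exceeds the nonnegative diagonal itself\<close>
    have "d' c = pair_cost D c c + ((real D + 1) * k - (real D - 1)) * exp (k * c)"
      by (simp add: d'_def diag algebra_simps)
    moreover have "(real D - 1) * 1 < (real D + 1) * k"
      using k \<open>real D - 1 > 0\<close> by (intro mult_strict_mono) auto
    ultimately show ?thesis
      using pair_cost_nonneg[OF assms, of c c] by (simp add: add_nonneg_pos)
  qed
  moreover have "d x < d y" if "x < y" for x y
    using that by (rule DERIV_pos_imp_increasing) (use d' d'_pos in blast)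
  ultimately show thesis
    using that by blast
qed

lemma pair_cost_diag_convex:
  assumes "2 \<le> D"
  shows "convex_on UNIV (\<lambda>c. pair_cost D c c)"
proof -
  obtain d where "\<And>c. ((\<lambda>c. pair_cost D c c) has_real_derivative d c) (at c)"
    and "\<And>x y. x < y \<Longrightarrow> d x < d y"
    using pair_cost_diag_deriv[OF assms] by blast
  then show ?thesis
    by (intro convex_on_realI[where f' = d]) (auto simp: le_less)
qed

lemma pair_cost_diag_strictly_convex:
  assumes "2 \<le> D"
  shows "strictly_convex_on S (\<lambda>c. pair_cost D c c)"
proof -
  obtain d where "\<And>c. ((\<lambda>c. pair_cost D c c) has_real_derivative d c) (at c)"
    and "\<And>x y. x < y \<Longrightarrow> d x < d y"
    using pair_cost_diag_deriv[OF assms] by blast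
  then show ?thesis
    by (rule strictly_convex_onI_deriv)
qed

lemma F_flat_eq_pair_cost_diag:
  assumes "2 \<le> D"
  shows "F_flat D \<mu>0 a = real D / \<mu>0\<^sup>2 * pair_cost D (- (\<mu>0 / real D * a)) (- (\<mu>0 / real D * a))"
proof -
  define s where "s = \<mu>0 / real D * a"
  have "2 * \<mu>0 / real D * a = - (- s + - s)"
    and "- (2 * \<mu>0 / (real D * (real D - 1))) * a = (- s + - s) / (real D - 1)"
    and "- (\<mu>0 / real D) * a = - s"
    by (simp_all add: s_def field_simps)
  then show ?thesis
    unfolding F_flat_def pair_cost_eq_Upsilon[OF assms] s_def[symmetric] by simp
qed

lemma F_flat_ge_square:
  assumes "2 \<le> D" "0 < \<mu>0" "0 \<le> a"
  shows "a\<^sup>2 / (2 * real D) \<le> F_flat D \<mu>0 a"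
proof -
  define s where "s = \<mu>0 / real D * a"
  have "0 \<le> s"
    using assms by (simp add: s_def)
  have "a\<^sup>2 / (2 * real D) = real D / \<mu>0\<^sup>2 * (s\<^sup>2 / 2)"
    using assms by (simp add: s_def field_simps power2_eq_square)
  also have "\<dots> \<le> real D / \<mu>0\<^sup>2 * (exp (- s) * Upsilon (2 * s))"
    using exp_minus_mult_Upsilon_double_ge[OF \<open>0 \<le> s\<close>] by (intro mult_left_mono) auto
  also have "\<dots> \<le> F_flat D \<mu>0 a"
    unfolding F_flat_eq_pair_cost_diag[OF assms(1)] pair_cost_eq_Upsilon[OF assms(1)] s_def[symmetric]
    using assms Upsilon_nonneg by (intro mult_left_mono) (auto intro!: mult_left_mono)
  finally show ?thesis .
qed

lemma F_flat_strictly_convex: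
  assumes "2 \<le> D" "0 < \<mu>0"
  shows "strictly_convex_on S (F_flat D \<mu>0)"
proof -
  have "F_flat D \<mu>0 = (\<lambda>a. real D / \<mu>0\<^sup>2 * pair_cost D (- (\<mu>0 / real D) * a) (- (\<mu>0 / real D) * a))"
    using F_flat_eq_pair_cost_diag[OF assms(1)] by auto
  then show ?thesis
    using assms by (simp only:) (intro strictly_convex_on_scale_compose pair_cost_diag_strictly_convex, auto)
qed

lemma F_flat_CD_function:
  assumes "2 \<le> D" "0 < \<mu>0"
  shows "CD_function (F_flat D \<mu>0)"
  unfolding CD_function_def
proof (intro conjI allI impI)
  show cont: "continuous_on {0..} (F_flat D \<mu>0)"
    unfolding F_flat_def Upsilon_def by (intro continuous_intros)
  show "0 \<le> F_flat D \<mu>0 x" if "0 \<le> x" for x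
    by (rule order.trans[OF _ F_flat_ge_square[OF assms that]]) simp
  show "F_flat D \<mu>0 0 = 0"
    by (simp add: F_flat_def Upsilon_def)
  then show "strict_mono_on {0<..} (\<lambda>x. F_flat D \<mu>0 x / x)"
    by (intro strict_mono_on_divide_self_if_strictly_convex F_flat_strictly_convex assms)
  show "(\<lambda>r. 1 / F_flat D \<mu>0 r) integrable_on {1..}"
    using assms by (intro integrable_on_inverse_if_quadratic_growth[where c = "1 / (2 * real D)"]
        continuous_on_subset[OF cont] F_flat_ge_square[THEN order.trans[rotated]]) auto
qed

lemma pairing_cost_pair_cost: "2 \<le> D \<Longrightarrow> pairing_cost (pair_cost D)"
  by unfold_locales (simp_all add: pair_cost_supermodular pair_cost_diag_le_swap_add pair_cost_diag_convex)

lemma pair_cost_add_le_sum_exp: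
  fixes y :: "'a \<Rightarrow> real"
  assumes "2 \<le> D" "finite J" "card J = D" "k \<in> J" "y k = - b" "real D * a \<le> sum y J"
  shows "pair_cost D a b + real D * exp a \<le> (\<Sum>j\<in>J. exp (y j))"
proof -
  define J' where "J' = J - {k}"
  have card': "real (card J') = real D - 1"
    using assms by (simp add: J'_def of_nat_diff)
  then have "J' \<noteq> {}" "real D - 1 > 0"
    using assms(1) by auto
  have "(real D * a + b) / (real D - 1) \<le> sum y J' / (real D - 1)"
    using assms sum.remove[OF assms(2,4), of y] \<open>real D - 1 > 0\<close>
    by (intro divide_right_mono) (simp_all add: J'_def)
  then have "pair_cost D a b + real D * exp a \<le> exp (- b) + (real D - 1) * exp (sum y J' / (real D - 1))"
    using \<open>real D - 1 > 0\<close> by (simp add: pair_cost_def)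
  also have "\<dots> \<le> exp (y k) + (\<Sum>j\<in>J'. exp (y j))"
    using sum_exp_ge_card_mult_exp_mean[of J' y] assms(2,5) \<open>J' \<noteq> {}\<close> card' by (simp add: J'_def)
  also have "\<dots> = (\<Sum>j\<in>J. exp (y j))"
    using sum.remove[OF assms(2,4), of "\<lambda>j. exp (y j)"] by (simp add: J'_def)
  finally show ?thesis .
qed

section \<open>Ricci-flat neighbourhoods\<close>

locale ricci_flat_frame =
  fixes E :: "'a \<Rightarrow> 'a \<Rightarrow> bool" and D :: nat and x :: 'a and eta :: "nat \<Rightarrow> 'a \<Rightarrow> 'a"
  assumes simple: "simple_graph E" and regular: "regular E D"
    and eta_edge: "\<And>i y. i < D \<Longrightarrow> y \<in> closed_nbhd E x \<Longrightarrow> E y (eta i y)"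
    and eta_inj: "\<And>i j y. y \<in> closed_nbhd E x \<Longrightarrow> i < D \<Longrightarrow> j < D \<Longrightarrow> i \<noteq> j \<Longrightarrow> eta i y \<noteq> eta j y"
    and eta_comm: "\<And>i. i < D \<Longrightarrow> image_mset (\<lambda>j. eta i (eta j x)) (mset_set {..<D})
                                  = image_mset (\<lambda>j. eta j (eta i x)) (mset_set {..<D})"

lemma ricci_flat_frame_exists:
  assumes "simple_graph E" "regular E D" "ricci_flat_at E D x"
  obtains eta where "ricci_flat_frame E D x eta"
  using assms unfolding ricci_flat_at_def ricci_flat_frame_def by metis

context ricci_flat_frame
begin

lemma nbrs_eq_image:
  assumes "y \<in> closed_nbhd E x"
  shows "nbrs E y = (\<lambda>i. eta i y) ` {..<D}" and "inj_on (\<lambda>i. eta i y) {..<D}"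
proof -
  show inj: "inj_on (\<lambda>i. eta i y) {..<D}"
    using eta_inj[OF assms] by (auto simp: inj_on_def)
  have "(\<lambda>i. eta i y) ` {..<D} \<subseteq> nbrs E y"
    using eta_edge assms by (auto simp: nbrs_def)
  moreover have "finite (nbrs E y)" "card (nbrs E y) = card ((\<lambda>i. eta i y) ` {..<D})"
    using regular card_image[OF inj] by (auto simp: regular_def)
  ultimately show "nbrs E y = (\<lambda>i. eta i y) ` {..<D}"
    by (metis card_subset_eq)
qed

lemma sum_nbrs:
  assumes "y \<in> closed_nbhd E x"
  shows "sum f (nbrs E y) = (\<Sum>i<D. f (eta i y))"
  using sum.reindex[OF nbrs_eq_image(2)[OF assms], of f] nbrs_eq_image(1)[OF assms] by simp

lemma center_in_closed_nbhd: "x \<in> closed_nbhd E x"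
  by (simp add: closed_nbhd_def)

lemma eta_in_closed_nbhd: "i < D \<Longrightarrow> eta i x \<in> closed_nbhd E x"
  using eta_edge[of i x] by (simp add: closed_nbhd_def nbrs_def)

lemma sum_two_steps:
  assumes "i < D"
  shows "(\<Sum>j<D. f (eta i (eta j x))) = sum f (nbrs E (eta i x))"
proof -
  have "(\<Sum>j<D. f (eta i (eta j x))) = sum_mset (image_mset f (image_mset (\<lambda>j. eta i (eta j x)) (mset_set {..<D})))"
    by (simp add: sum_unfold_sum_mset image_mset.compositionality comp_def)
  also have "\<dots> = (\<Sum>j<D. f (eta j (eta i x)))"
    by (simp add: eta_comm[OF assms] sum_unfold_sum_mset image_mset.compositionality comp_def)
  also have "\<dots> = sum f (nbrs E (eta i x))"
    by (rule sum_nbrs[OF eta_in_closed_nbhd[OF assms], symmetric])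
  finally show ?thesis .
qed

lemma return_perm:
  obtains \<sigma> where "bij_betw \<sigma> {..<D} {..<D}" "\<And>i. i < D \<Longrightarrow> eta i (eta (\<sigma> i) x) = x"
proof -
  have "\<exists>j<D. eta i (eta j x) = x" if "i < D" for i
  proof -
    have "x \<in> nbrs E (eta i x)"
      using eta_edge[OF that] simple by (simp add: closed_nbhd_def nbrs_def simple_graph_def)
    then have "x \<in># image_mset (\<lambda>j. eta j (eta i x)) (mset_set {..<D})"
      using nbrs_eq_image(1)[OF eta_in_closed_nbhd[OF that]] by simp
    then show ?thesis
      unfolding eta_comm[OF that, symmetric] by auto
  qed
  then obtain \<sigma> where \<sigma>: "\<And>i. i < D \<Longrightarrow> \<sigma> i < D \<and> eta i (eta (\<sigma> i) x) = x"
    by metis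
  have "inj_on \<sigma> {..<D}"
  proof (rule inj_onI)
    fix i i' assume "i \<in> {..<D}" "i' \<in> {..<D}" "\<sigma> i = \<sigma> i'"
    then have "eta i (eta (\<sigma> i) x) = eta i' (eta (\<sigma> i) x)" "i < D" "i' < D"
      using \<sigma> by (metis lessThan_iff)+
    then show "i = i'"
      using \<sigma> eta_inj[OF eta_in_closed_nbhd, of "\<sigma> i" i i'] by blast
  qed
  moreover have "\<sigma> ` {..<D} \<subseteq> {..<D}"
    using \<sigma> by auto
  ultimately have "bij_betw \<sigma> {..<D} {..<D}"
    by (simp add: bij_betw_def endo_inj_surj)
  then show thesis
    using that \<sigma> by blast
qed

lemma card_nbrs: "card (nbrs E y) = D"
  using regular by (simp add: regular_def)

lemma laplacian_const_weight:
  "y \<in> closed_nbhd E x \<Longrightarrow> laplacian E (\<lambda>_. \<mu>0) u y = (\<Sum>i<D. u (eta i y) - u y) / \<mu>0"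
  by (simp add: laplacian_def sum_nbrs)

lemma Psi_Upsilon'_const_weight:
  "y \<in> closed_nbhd E x \<Longrightarrow> Psi E (\<lambda>_. \<mu>0) Upsilon' v y = ((\<Sum>i<D. exp (v (eta i y) - v y)) - real D) / \<mu>0"
  by (simp add: Psi_def Upsilon'_def sum_nbrs sum_subtractf card_nbrs)

lemma row_bound:
  assumes "2 \<le> D" "0 < \<mu>0" "i < D" "k < D" "eta i (eta k x) = x"
    and "Lop E (\<lambda>_. \<mu>0) v (eta i x) \<le> Lop E (\<lambda>_. \<mu>0) v x"
  shows "pair_cost D (v (eta i x) - v x) (v (eta k x) - v x) + real D * exp (v (eta i x) - v x)
    \<le> (\<Sum>j<D. exp (v (eta i (eta j x)) - v (eta j x)))"
proof (rule pair_cost_add_le_sum_exp[where k = k])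
  have "(\<Sum>j<D. v (eta j x) - v x) \<le> (\<Sum>j<D. v (eta j (eta i x)) - v (eta i x))"
    using assms(2,6) eta_in_closed_nbhd[OF assms(3)]
    by (simp add: Lop_def laplacian_const_weight center_in_closed_nbhd divide_le_cancel)
  then show "real D * (v (eta i x) - v x) \<le> (\<Sum>j<D. v (eta i (eta j x)) - v (eta j x))"
    using sum_two_steps[OF assms(3), of v] sum_nbrs[OF eta_in_closed_nbhd[OF assms(3)], of v]
    by (simp add: sum_subtractf algebra_simps)
qed (use assms in auto)

lemma pair_cost_sum_le_laplacian_Psi:
  assumes "2 \<le> D" "0 < \<mu>0" "\<And>i. i < D \<Longrightarrow> \<sigma> i < D" "\<And>i. i < D \<Longrightarrow> eta i (eta (\<sigma> i) x) = x"
    and "\<And>i. i < D \<Longrightarrow> Lop E (\<lambda>_. \<mu>0) v (eta i x) \<le> Lop E (\<lambda>_. \<mu>0) v x"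
  shows "(\<Sum>i<D. pair_cost D (v (eta i x) - v x) (v (eta (\<sigma> i) x) - v x))
    \<le> \<mu>0\<^sup>2 * laplacian E (\<lambda>_. \<mu>0) (Psi E (\<lambda>_. \<mu>0) Upsilon' v) x"
proof -
  have "(\<Sum>i<D. pair_cost D (v (eta i x) - v x) (v (eta (\<sigma> i) x) - v x))
      = (\<Sum>i<D. pair_cost D (v (eta i x) - v x) (v (eta (\<sigma> i) x) - v x) + real D * exp (v (eta i x) - v x))
        - (\<Sum>i<D. real D * exp (v (eta i x) - v x))"
    by (simp add: sum.distrib)
  also have "\<dots> \<le> (\<Sum>i<D. \<Sum>j<D. exp (v (eta i (eta j x)) - v (eta j x))) - (\<Sum>i<D. real D * exp (v (eta i x) - v x))"
    using row_bound[OF assms(1,2) _ assms(3,4,5)] by (intro diff_right_mono sum_mono) simp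
  also have "\<dots> = (\<Sum>j<D. \<Sum>i<D. exp (v (eta i (eta j x)) - v (eta j x))) - real D * (\<Sum>i<D. exp (v (eta i x) - v x))"
    by (subst sum.swap) (simp add: sum_distrib_left)
  also have "\<dots> = \<mu>0\<^sup>2 * laplacian E (\<lambda>_. \<mu>0) (Psi E (\<lambda>_. \<mu>0) Upsilon' v) x"
    using assms(2) eta_in_closed_nbhd
    by (simp add: laplacian_const_weight Psi_Upsilon'_const_weight center_in_closed_nbhd sum_subtractf
        flip: sum_divide_distrib)
      (simp add: field_simps power2_eq_square)
  finally show ?thesis .
qed

lemma F_flat_le_laplacian_Psi:
  assumes "2 \<le> D" "0 < \<mu>0" "\<And>y. E x y \<Longrightarrow> Lop E (\<lambda>_. \<mu>0) v y \<le> Lop E (\<lambda>_. \<mu>0) v x"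
  shows "F_flat D \<mu>0 (Lop E (\<lambda>_. \<mu>0) v x) \<le> laplacian E (\<lambda>_. \<mu>0) (Psi E (\<lambda>_. \<mu>0) Upsilon' v) x"
proof -
  obtain \<sigma> where \<sigma>: "bij_betw \<sigma> {..<D} {..<D}" "\<And>i. i < D \<Longrightarrow> eta i (eta (\<sigma> i) x) = x"
    using return_perm by blast
  define w where "w i = v (eta i x) - v x" for i
  define m where "m = - (\<mu>0 / real D * Lop E (\<lambda>_. \<mu>0) v x)"
  have "sum w {..<D} / real (card {..<D}) = m"
    using assms(1,2) by (simp add: w_def m_def Lop_def laplacian_const_weight center_in_closed_nbhd)
  then have "real D * pair_cost D m m \<le> (\<Sum>i<D. pair_cost D (w i) (w (\<sigma> i)))"
    using pairing_cost.card_mult_diag_mean_le_sum_perm[OF pairing_cost_pair_cost[OF assms(1)] _ \<sigma>(1), of w]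
    by simp
  also have "\<dots> \<le> \<mu>0\<^sup>2 * laplacian E (\<lambda>_. \<mu>0) (Psi E (\<lambda>_. \<mu>0) Upsilon' v) x"
    unfolding w_def using assms bij_betw_apply[OF \<sigma>(1)] \<sigma>(2) eta_edge center_in_closed_nbhd
    by (intro pair_cost_sum_le_laplacian_Psi) auto
  finally show ?thesis
    using assms(2) by (simp add: F_flat_eq_pair_cost_diag[OF assms(1)] m_def field_simps)
qed

end

theorem theorem3p11:
  fixes E :: "'a \<Rightarrow> 'a \<Rightarrow> bool" and D :: nat and \<mu> :: "'a \<Rightarrow> real" and \<mu>0 :: real
  assumes "simple_graph E" and "regular E D" and "ricci_flat E D" and "D \<ge> 2"
    and "\<mu>0 > 0" and "\<forall>y. \<mu> y = \<mu>0"
  shows "strictly_convex_on {0..} (F_flat D \<mu>0) \<and> CD_F0 E \<mu> (F_flat D \<mu>0)"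
proof -
  have \<mu>: "\<mu> = (\<lambda>_. \<mu>0)"
    using assms(6) by auto
  have "F_flat D \<mu>0 (Lop E \<mu> v x) \<le> laplacian E \<mu> (Psi E \<mu> Upsilon' v) x"
    if "\<forall>y. E x y \<longrightarrow> Lop E \<mu> v y \<le> Lop E \<mu> v x" for x v
  proof -
    have "ricci_flat_at E D x"
      using assms(3) by (simp add: ricci_flat_def)
    then obtain eta where "ricci_flat_frame E D x eta"
      using ricci_flat_frame_exists[OF assms(1,2)] by blast
    then show ?thesis
      using that assms(4,5) unfolding \<mu> by (intro ricci_flat_frame.F_flat_le_laplacian_Psi) simp_all
  qed
  moreover have "strictly_convex_on {0..} (F_flat D \<mu>0)" "CD_function (F_flat D \<mu>0)"
    using assms(4,5) by (rule F_flat_strictly_convex, rule F_flat_CD_function)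
  ultimately show ?thesis
    unfolding CD_F0_def by simp
qed

end
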